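(* A symbolic matrix product $P$ is positive semi-definite if and only if $P$ is symmetric.
   Context: Let $X_1,\dots,X_\ell$ be formal variables. A symbolic matrix product of degree $k$ with $\ell$ variables is a formal word $P=\prod_{i=1}^{k}X_{\iota(i)}^{\tau(i)}$ with $\iota:[k]\to[\ell]$ and $\tau:[k]\to\{1,T\}$. Formal transposition acts on words by $(X_i^{1})^T=X_i^T$, $(X_i^T)^T=X_i$ and $(W_1W_2)^T=W_2^TW_1^T$; equality of products means equality as formal words. For $n\in\mathbb N$ and $A_1,\dots,A_\ell\in\mathbb R^{n\times n}$, $P(A_1,\dots,A_\ell)$ denotes the matrix obtained by substituting $A_i$ for $X_i$ (and $A_i^T$ for $X_i^T$) and multiplying. $P$ is called positive semi-definite if for every $n\in\mathbb N$ and all $A_1,\dots,A_\ell\in\mathbb R^{n\times n}$, all (complex) eigenvalues of $P(A_1,\dots,A_\ell)$ are real and non-negative. $P$ is called symmetric if $k$ is even and there exists $j\in[k]$ such that, with indices modulo $k$, the cyclically shifted word $\prod_{i=j+1}^{j+k}X_{\iota(i)}^{\tau(i)}$ equals $LL^T$ as a formal word, where $L=\prod_{i=j+1}^{j+k/2}X_{\iota(i)}^{\tau(i)}$. *)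

theory Defs
  imports "Jordan_Normal_Form.Matrix" "Jordan_Normal_Form.Char_Poly"
begin

text \<open>A letter (i, t) stands for X_i if t = False and for X_i^T if t = True.
  A symbolic matrix product of degree k is a list of k letters.\<close>
type_synonym letter = "nat \<times> bool"
type_synonym word = "letter list"

definition letter_transp :: "letter \<Rightarrow> letter" where
  "letter_transp l = (fst l, \<not> snd l)"

definition word_transp :: "word \<Rightarrow> word" where
  "word_transp w = rev (map letter_transp w)"

definition eval_letter :: "(nat \<Rightarrow> real mat) \<Rightarrow> letter \<Rightarrow> real mat" where
  "eval_letter A l = (if snd l then transpose_mat (A (fst l)) else A (fst l))"

definition eval_word :: "nat \<Rightarrow> (nat \<Rightarrow> real mat) \<Rightarrow> word \<Rightarrow> real mat" where
  "eval_word n A w = foldr (\<lambda>l M. eval_letter A l * M) w (1\<^sub>m n)"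

definition psd_word :: "word \<Rightarrow> bool" where
  "psd_word w = (\<forall>n A. (\<forall>i. A i \<in> carrier_mat n n) \<longrightarrow>
     (\<forall>c. eigenvalue (map_mat complex_of_real (eval_word n A w)) c \<longrightarrow>
        c \<in> \<real> \<and> 0 \<le> Re c))"

text \<open>Symmetric: k even and some cyclic shift equals L L^T with L its first half.
  Shift by j in [k] (1-based) corresponds to rotate j, and j = k is the same as j = 0.\<close>
definition symmetric_word :: "word \<Rightarrow> bool" where
  "symmetric_word w = (even (length w) \<and>
     (\<exists>j < length w. rotate j w = take (length w div 2) (rotate j w) @
                                  word_transp (take (length w div 2) (rotate j w))))"

end

theory Submission
  imports Defs "Jordan_Normal_Form.Schur_Decomposition"
begin

(*
  If P is symmetric, P = U V with V U = L L^T for the first half L of a cyclic shift. For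
  real matrices the nonzero eigenvalues of U V and V U agree, and L L^T has non-negative
  eigenvalues.

  Conversely, let k = |P| and write the letters of P on the edges a -> a + 1 of the cycle
  Z/k. Substitute for X_i the complex k x k matrix with entry s on every edge labelled X_i
  and entry conj s on the reversed edge of every edge labelled X_i^T; then X_i^T receives
  the conjugate transpose. The trace of the substituted product counts closed walks of
  length k that spell P, weighted by s^f (conj s)^(k - f) for f forward steps, and a
  closed walk has f = 0, 2 f = k or f = k. Walking once around gives f = k, while a closed
  walk with f = 0 reads P backwards and transposed, which makes P a reflection of itself
  and hence symmetric. For non-symmetric P and s = exp(i pi / (2 k)) the trace therefore
  has positive imaginary part, so some eigenvalue is not real. Replacing every complex
  matrix by its real 2 x 2 block form yields real matrices with the same eigenvalue.
*)

lemma letter_transp_neq [simp]: "letter_transp l \<noteq> l"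
  by (simp add: letter_transp_def prod_eq_iff)

lemma letter_transp_transp [simp]: "letter_transp (letter_transp l) = l"
  by (simp add: letter_transp_def)

lemma word_transp_append: "word_transp (u @ v) = word_transp v @ word_transp u"
  by (simp add: word_transp_def)

lemma word_transp_transp [simp]: "word_transp (word_transp w) = w"
  by (simp add: word_transp_def rev_map comp_def)

lemma length_word_transp [simp]: "length (word_transp w) = length w"
  by (simp add: word_transp_def)

lemma nth_word_transp:
  "i < length w \<Longrightarrow> word_transp w ! i = letter_transp (w ! (length w - Suc i))"
  by (simp add: word_transp_def rev_nth)

lemma eval_word_Nil: "eval_word n A [] = 1\<^sub>m n"
  by (simp add: eval_word_def)

lemma eval_word_Cons: "eval_word n A (l # w) = eval_letter A l * eval_word n A w"
  by (simp add: eval_word_def)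

context
  fixes n :: nat and A :: "nat \<Rightarrow> real mat"
  assumes A: "\<And>i. A i \<in> carrier_mat n n"
begin

lemma eval_letter_carrier [simp]: "eval_letter A l \<in> carrier_mat n n"
  using A by (simp add: eval_letter_def)

lemma eval_word_carrier [simp]: "eval_word n A w \<in> carrier_mat n n"
  by (induction w) (simp_all add: eval_word_Nil eval_word_Cons mult_carrier_mat[of _ n n _ n])

lemma eval_word_append: "eval_word n A (u @ v) = eval_word n A u * eval_word n A v"
  by (induction u)
     (simp_all add: eval_word_Nil eval_word_Cons assoc_mult_mat[of _ n n _ n _ n] left_mult_one_mat[of _ n n])

lemma eval_word_single: "eval_word n A [l] = eval_letter A l"
  by (simp add: eval_word_Cons eval_word_Nil right_mult_one_mat[OF eval_letter_carrier])

lemma eval_word_transp: "eval_word n A (word_transp w) = transpose_mat (eval_word n A w)"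
proof (induction w)
  case (Cons l w)
  have "eval_word n A [letter_transp l] = transpose_mat (eval_letter A l)"
    by (simp add: eval_word_single eval_letter_def letter_transp_def)
  with Cons show ?case
    by (simp add: word_transp_def eval_word_append eval_word_Cons transpose_mult[of _ n n _ n])
qed (simp add: word_transp_def eval_word_Nil)

end

section \<open>Symmetric products are positive semi-definite\<close>

lemma smult_vec_eq_zero_iff:
  fixes v :: "'a :: idom vec"
  assumes v: "v \<in> carrier_vec n"
  shows "c \<cdot>\<^sub>v v = 0\<^sub>v n \<longleftrightarrow> c = 0 \<or> v = 0\<^sub>v n"
proof (intro iffI)
  assume cv: "c \<cdot>\<^sub>v v = 0\<^sub>v n"
  have "c * v $ i = 0" if "i < n" for i
  proof -
    have "c * v $ i = (c \<cdot>\<^sub>v v) $ i" using that v by simp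
    also have "\<dots> = 0" using cv that by simp
    finally show ?thesis .
  qed
  then show "c = 0 \<or> v = 0\<^sub>v n" using v by (auto intro!: eq_vecI)
qed (use v in auto)

lemma eigenvalue_mult_swap:
  fixes X Y :: "'a :: field mat"
  assumes X: "X \<in> carrier_mat n n" and Y: "Y \<in> carrier_mat n n"
    and ev: "eigenvalue (X * Y) c" and "c \<noteq> 0"
  shows "eigenvalue (Y * X) c"
proof -
  from ev obtain v where v: "v \<in> carrier_vec n" "v \<noteq> 0\<^sub>v n"
    and XYv: "X *\<^sub>v (Y *\<^sub>v v) = c \<cdot>\<^sub>v v"
    unfolding eigenvalue_def eigenvector_def using X Y by (auto simp: assoc_mult_mat_vec)
  define u where "u = Y *\<^sub>v v"
  have u: "u \<in> carrier_vec n" using Y v unfolding u_def by auto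
  have "u \<noteq> 0\<^sub>v n"
  proof
    assume "u = 0\<^sub>v n"
    then have "X *\<^sub>v u = 0\<^sub>v n" using X by (intro eq_vecI) auto
    then have "c \<cdot>\<^sub>v v = 0\<^sub>v n" using XYv unfolding u_def by simp
    then show False using v \<open>c \<noteq> 0\<close> by (simp add: smult_vec_eq_zero_iff)
  qed
  moreover have "(Y * X) *\<^sub>v u = c \<cdot>\<^sub>v u"
    using X Y v XYv unfolding u_def
    by (simp add: assoc_mult_mat_vec[of _ n n _ n] mult_mat_vec[OF Y v(1)])
  ultimately show ?thesis unfolding eigenvalue_def eigenvector_def using u X Y by auto
qed

lemma eigenvalue_mult_transpose_nonneg:
  fixes E :: "real mat"
  assumes E: "E \<in> carrier_mat n m"
    and ev: "eigenvalue (map_mat complex_of_real (E * transpose_mat E)) c"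
  shows "c \<in> \<real> \<and> 0 \<le> Re c"
proof -
  define M where "M = map_mat complex_of_real E"
  have M: "M \<in> carrier_mat n m" and Mt: "transpose_mat M \<in> carrier_mat m n"
    using E unfolding M_def by auto
  have "map_mat complex_of_real (E * transpose_mat E) = M * transpose_mat M"
    using E unfolding M_def by (simp add: of_real_hom.mat_hom_mult[of _ n m _ n] map_mat_transpose)
  with ev obtain v where v: "v \<in> carrier_vec n" "v \<noteq> 0\<^sub>v n"
    and eig: "M *\<^sub>v (transpose_mat M *\<^sub>v v) = c \<cdot>\<^sub>v v"
    unfolding eigenvalue_def eigenvector_def using M Mt by auto
  define u where "u = transpose_mat M *\<^sub>v v"
  have u: "u \<in> carrier_vec m" using Mt v unfolding u_def by auto
  have conj_u: "conjugate u = transpose_mat M *\<^sub>v conjugate v"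
    using E v unfolding u_def M_def
    by (intro eq_vecI) (auto simp: scalar_prod_def cnj_sum)
  have "c * (v \<bullet>c v) = conjugate v \<bullet> (M *\<^sub>v u)"
    using v M u eig unfolding u_def
    by (simp add: comm_scalar_prod[of _ n "conjugate v"])
  also have "\<dots> = conjugate u \<bullet> u"
    using transpose_vec_mult_scalar[OF M u carrier_vec_conjugate[OF v(1)]] conj_u by simp
  also have "\<dots> = u \<bullet>c u"
    using conjugate_vec_sprod_comm[OF u u] by simp
  finally have eq: "c * (v \<bullet>c v) = u \<bullet>c u" .
  have "v \<bullet>c v > 0" using v by simp
  then have pos: "Im (v \<bullet>c v) = 0" "Re (v \<bullet>c v) > 0" by (auto simp: less_complex_def)
  have "u \<bullet>c u \<ge> 0" by auto
  then have nonneg: "Im (u \<bullet>c u) = 0" "Re (u \<bullet>c u) \<ge> 0" by (auto simp: less_eq_complex_def)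
  have "Im c * Re (v \<bullet>c v) = 0" using arg_cong[OF eq, of Im] pos nonneg by simp
  then have Im_c: "Im c = 0" using pos by simp
  then have "Re c * Re (v \<bullet>c v) \<ge> 0" using arg_cong[OF eq, of Re] pos nonneg by simp
  then have "Re c \<ge> 0" using pos by (simp add: zero_le_mult_iff)
  with Im_c show ?thesis by (simp add: complex_is_Real_iff)
qed

lemma symmetric_word_imp_psd_word:
  assumes "symmetric_word P"
  shows "psd_word P"
  unfolding psd_word_def
proof (intro allI impI)
  fix n A c
  assume A: "\<forall>i. A i \<in> carrier_mat n n"
    and ev: "eigenvalue (map_mat complex_of_real (eval_word n A P)) c"
  then have A: "\<And>i. A i \<in> carrier_mat n n" by blast
  from assms obtain j where j: "j < length P"
    and rot: "rotate j P = take (length P div 2) (rotate j P) @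
                word_transp (take (length P div 2) (rotate j P))"
    unfolding symmetric_word_def by blast
  define E where "E = eval_word n A (take (length P div 2) (rotate j P))"
  define X where "X = eval_word n A (take j P)"
  define Y where "Y = eval_word n A (drop j P)"
  have X: "X \<in> carrier_mat n n" and Y: "Y \<in> carrier_mat n n"
    unfolding X_def Y_def using A by simp_all
  have "eval_word n A P = X * Y"
    unfolding X_def Y_def eval_word_append[OF A, symmetric] by simp
  then have XY: "map_mat complex_of_real (eval_word n A P)
      = map_mat complex_of_real X * map_mat complex_of_real Y"
    using of_real_hom.mat_hom_mult[OF X Y] by simp
  have "Y * X = eval_word n A (rotate j P)"
    using j unfolding X_def Y_def eval_word_append[OF A, symmetric] by (simp add: rotate_drop_take)
  also have "\<dots> = E * transpose_mat E"
    unfolding E_def by (subst rot) (simp add: eval_word_append[OF A] eval_word_transp[OF A])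
  finally have YX: "map_mat complex_of_real (E * transpose_mat E)
      = map_mat complex_of_real Y * map_mat complex_of_real X"
    using of_real_hom.mat_hom_mult[OF Y X] by simp
  show "c \<in> \<real> \<and> 0 \<le> Re c"
  proof (cases "c = 0")
    case False
    have "eigenvalue (map_mat complex_of_real (E * transpose_mat E)) c"
      unfolding YX using ev False X Y unfolding XY
      by (intro eigenvalue_mult_swap[of "map_mat complex_of_real X" n]) simp_all
    then show ?thesis
      using eigenvalue_mult_transpose_nonneg[of E n n] A unfolding E_def by simp
  qed simp
qed

section \<open>Reflections of cyclic words\<close>

definition cyc_index :: "nat \<Rightarrow> int \<Rightarrow> nat" where
  "cyc_index k x = nat (x mod int k)"

lemma cyc_index_less: "0 < k \<Longrightarrow> cyc_index k x < k"
  by (simp add: cyc_index_def nat_less_iff)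

lemma int_cyc_index: "0 < k \<Longrightarrow> int (cyc_index k x) = x mod int k"
  by (simp add: cyc_index_def)

lemma cyc_index_eq_iff:
  "0 < k \<Longrightarrow> cyc_index k x = cyc_index k y \<longleftrightarrow> x mod int k = y mod int k"
  by (metis int_cyc_index of_nat_eq_iff)

lemma cyc_index_of_nat: "a < k \<Longrightarrow> cyc_index k (int a) = a"
  by (simp add: cyc_index_def)

lemma cyc_index_shift: "0 < k \<Longrightarrow> cyc_index k (int (cyc_index k x) + d) = cyc_index k (x + d)"
  by (simp add: cyc_index_eq_iff int_cyc_index mod_add_left_eq)

lemma cyc_index_succ_eq_iff:
  assumes a: "a < k" and c: "c < k"
  shows "a = cyc_index k (int c + 1) \<longleftrightarrow> c = cyc_index k (int a - 1)"
proof -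
  have k: "0 < k" using a by simp
  have "a = cyc_index k (int c + 1) \<longleftrightarrow> int a mod k = (int c + 1) mod k"
    using cyc_index_eq_iff[OF k, of "int a"] cyc_index_of_nat[OF a] by simp
  also have "\<dots> \<longleftrightarrow> int c mod k = (int a - 1) mod k"
    by (simp add: mod_eq_dvd_iff dvd_diff_commute algebra_simps)
  also have "\<dots> \<longleftrightarrow> c = cyc_index k (int a - 1)"
    using cyc_index_eq_iff[OF k, of "int c"] cyc_index_of_nat[OF c] by simp
  finally show ?thesis .
qed

lemma halves_if_word_transp_eq:
  assumes "even (length u)" and "word_transp u = u"
  shows "u = take (length u div 2) u @ word_transp (take (length u div 2) u)"
proof -
  define T where "T = take (length u div 2) u"
  define D where "D = drop (length u div 2) u"
  have u: "u = T @ D" unfolding T_def D_def by simp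
  have "length (word_transp D) = length T" using assms(1) unfolding T_def D_def by auto
  moreover have "word_transp D @ word_transp T = T @ D"
    using assms(2) unfolding u word_transp_append .
  ultimately have "word_transp D = T" by simp
  then show ?thesis unfolding T_def[symmetric] using u by auto
qed

lemma symmetric_word_if_reflection:
  assumes k: "0 < length w"
    and reflection: "\<And>j. j < length w \<Longrightarrow>
      w ! j = letter_transp (w ! cyc_index (length w) (c - int j))"
  shows "symmetric_word w"
proof -
  let ?k = "length w"
  (* j \<mapsto> c - j is an involution of Z/k without fixed points. This forces k to be even
     and c to be odd, and then a rotation by h = (c + 1) / 2 turns it into j \<mapsto> k - 1 - j. *)
  have no_fixpoint: "(c - int j) mod ?k \<noteq> int j" if "j < ?k" for j
    using reflection[OF that] that k cyc_index_of_nat[OF that] int_cyc_index[OF k]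
    by (metis letter_transp_neq of_nat_eq_iff)
  define c' where "c' = nat (c mod ?k)"
  have c': "int c' = c mod ?k" "c' < ?k" using k unfolding c'_def by (simp_all add: nat_less_iff)
  have diff_c: "(c - int j) mod ?k = (int c' - int j) mod ?k" for j
    using c' by (simp add: mod_diff_left_eq)
  have "odd c'"
  proof
    assume "even c'"
    then have "int c' - int (c' div 2) = int (c' div 2)" by presburger
    then show False using no_fixpoint[of "c' div 2"] diff_c[of "c' div 2"] c' by simp
  qed
  have "even ?k"
  proof (rule ccontr)
    assume "odd ?k"
    then have "int c' - int ((c' + ?k) div 2) = int ((c' + ?k) div 2) - int ?k"
      using \<open>odd c'\<close> by presburger
    then show False
      using no_fixpoint[of "(c' + ?k) div 2"] diff_c[of "(c' + ?k) div 2"] c' by simp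
  qed
  define h where "h = (c' + 1) div 2"
  have h: "h < ?k" using c'(2) unfolding h_def by presburger
  have c_h: "int ?k dvd c + 1 - 2 * int h"
  proof -
    have "int c' + 1 = 2 * int h" using \<open>odd c'\<close> unfolding h_def by presburger
    then show ?thesis using c' by (metis mod_eq_dvd_iff mod_add_left_eq)
  qed
  define u where "u = rotate h w"
  have "word_transp u = u"
  proof (rule nth_equalityI)
    fix s assume "s < length (word_transp u)"
    then have s: "s < ?k" by (simp add: u_def)
    have "(c - int ((h + s) mod ?k)) mod ?k = (c - int h - int s) mod ?k"
      by (simp add: of_nat_mod mod_diff_right_eq algebra_simps)
    also have "\<dots> = (int h + (int ?k - 1 - int s)) mod ?k"
    proof -
      have "c - int h - int s - (int h + (int ?k - 1 - int s)) = (c + 1 - 2 * int h) - int ?k"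
        by simp
      also have "int ?k dvd \<dots>" using c_h by simp
      finally show ?thesis by (simp only: mod_eq_dvd_iff)
    qed
    also have "\<dots> = int ((h + (?k - Suc s)) mod ?k)"
      using s by (simp add: of_nat_mod of_nat_diff algebra_simps)
    finally have "(c - int ((h + s) mod ?k)) mod ?k = int ((h + (?k - Suc s)) mod ?k)" .
    then show "word_transp u ! s = u ! s"
      using reflection[of "(h + s) mod ?k"] s k
      by (simp add: u_def nth_word_transp nth_rotate cyc_index_def)
  qed (simp add: u_def)
  then show ?thesis
    unfolding symmetric_word_def using halves_if_word_transp_eq[of u] \<open>even ?k\<close> h
    by (auto simp: u_def)
qed

section \<open>Realification and traces\<close>

definition realify :: "complex mat \<Rightarrow> real mat" where
  "realify M = four_block_mat (map_mat Re M) (- map_mat Im M) (map_mat Im M) (map_mat Re M)"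

lemma realify_carrier [simp]:
  "M \<in> carrier_mat n m \<Longrightarrow> realify M \<in> carrier_mat (n + n) (m + m)"
  by (simp add: realify_def)

lemma realify_one: "realify (1\<^sub>m n) = 1\<^sub>m (n + n)"
  by (intro eq_matI) (auto simp: realify_def)

lemma realify_adjoint: "realify (transpose_mat (map_mat cnj M)) = transpose_mat (realify M)"
  by (intro eq_matI) (auto simp: realify_def)

lemma realify_mult:
  assumes M: "M \<in> carrier_mat n m" and N: "N \<in> carrier_mat m p"
  shows "realify (M * N) = realify M * realify N"
proof -
  have "realify M * realify N = four_block_mat
     (map_mat Re M * map_mat Re N + - map_mat Im M * map_mat Im N)
     (map_mat Re M * - map_mat Im N + - map_mat Im M * map_mat Re N)
     (map_mat Im M * map_mat Re N + map_mat Re M * map_mat Im N)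
     (map_mat Im M * - map_mat Im N + map_mat Re M * map_mat Re N)"
    unfolding realify_def using M N by (intro mult_four_block_mat) auto
  also have "\<dots> = realify (M * N)"
    unfolding realify_def using M N
    by (intro arg_cong4[where f = four_block_mat] eq_matI)
       (auto simp: scalar_prod_def Re_sum Im_sum sum_subtractf sum.distrib sum_negf)
  finally show ?thesis ..
qed

lemma eigenvalue_realify:
  assumes M: "M \<in> carrier_mat n n" and ev: "eigenvalue M \<mu>"
  shows "eigenvalue (map_mat complex_of_real (realify M)) \<mu>"
proof -
  from ev obtain v where v: "v \<in> carrier_vec n" "v \<noteq> 0\<^sub>v n"
    and Mv: "M *\<^sub>v v = \<mu> \<cdot>\<^sub>v v"
    unfolding eigenvalue_def eigenvector_def using M by auto
  define A where "A = map_mat (\<lambda>z. complex_of_real (Re z)) M"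
  define B where "B = map_mat (\<lambda>z. complex_of_real (Im z)) M"
  define w where "w = (- \<i>) \<cdot>\<^sub>v v"
  have carr: "A \<in> carrier_mat n n" "B \<in> carrier_mat n n" "- B \<in> carrier_mat n n"
    "w \<in> carrier_vec n"
    using M v unfolding A_def B_def w_def by auto
  have w: "w $ j = - \<i> * v $ j" if "j \<in> {0..<n}" for j
    using that v unfolding w_def by simp
  have top: "A *\<^sub>v v + (- B) *\<^sub>v w = M *\<^sub>v v"
  proof (rule eq_vecI)
    fix i assume "i < dim_vec (M *\<^sub>v v)"
    then have i: "i < n" using M by simp
    have "(A *\<^sub>v v + (- B) *\<^sub>v w) $ i
        = (\<Sum>j = 0..<n. A $$ (i, j) * v $ j - B $$ (i, j) * w $ j)"
      using i carr v by (simp add: scalar_prod_def sum_subtractf)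
    also have "\<dots> = (\<Sum>j = 0..<n. M $$ (i, j) * v $ j)"
      using i M by (intro sum.cong refl) (simp add: w A_def B_def complex_eq_iff)
    also have "\<dots> = (M *\<^sub>v v) $ i"
      using i M v by (simp add: scalar_prod_def)
    finally show "(A *\<^sub>v v + (- B) *\<^sub>v w) $ i = (M *\<^sub>v v) $ i" .
  qed (use M carr v in auto)
  have bot: "B *\<^sub>v v + A *\<^sub>v w = (- \<i>) \<cdot>\<^sub>v (M *\<^sub>v v)"
  proof (rule eq_vecI)
    fix i assume "i < dim_vec ((- \<i>) \<cdot>\<^sub>v (M *\<^sub>v v))"
    then have i: "i < n" using M by simp
    have "(B *\<^sub>v v + A *\<^sub>v w) $ i
        = (\<Sum>j = 0..<n. B $$ (i, j) * v $ j + A $$ (i, j) * w $ j)"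
      using i carr v by (simp add: scalar_prod_def sum.distrib)
    also have "\<dots> = (\<Sum>j = 0..<n. - \<i> * (M $$ (i, j) * v $ j))"
      using i M by (intro sum.cong refl) (simp add: w A_def B_def complex_eq_iff)
    also have "\<dots> = ((- \<i>) \<cdot>\<^sub>v (M *\<^sub>v v)) $ i"
      using i M v by (simp add: scalar_prod_def sum_distrib_left)
    finally show "(B *\<^sub>v v + A *\<^sub>v w) $ i = ((- \<i>) \<cdot>\<^sub>v (M *\<^sub>v v)) $ i" .
  qed (use M carr v in auto)
  have "map_mat complex_of_real (realify M) = four_block_mat A (- B) B A"
    using M unfolding realify_def A_def B_def by (intro eq_matI) auto
  then have "map_mat complex_of_real (realify M) *\<^sub>v (v @\<^sub>v w)
      = (M *\<^sub>v v) @\<^sub>v ((- \<i>) \<cdot>\<^sub>v (M *\<^sub>v v))"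
    using four_block_mat_mult_vec[OF carr(1,3,2,1) v(1) carr(4)] top bot by simp
  also have "\<dots> = \<mu> \<cdot>\<^sub>v (v @\<^sub>v w)"
    unfolding Mv w_def using v by (intro eq_vecI) (auto simp: index_append_vec)
  finally have "map_mat complex_of_real (realify M) *\<^sub>v (v @\<^sub>v w)
      = \<mu> \<cdot>\<^sub>v (v @\<^sub>v w)" .
  moreover have "v @\<^sub>v w \<noteq> 0\<^sub>v (n + n)"
  proof
    assume vw0: "v @\<^sub>v w = 0\<^sub>v (n + n)"
    have "v $ i = 0" if "i < n" for i
    proof -
      have "v $ i = (v @\<^sub>v w) $ i" using that v by (simp add: index_append_vec)
      then show ?thesis using that vw0 by simp
    qed
    then show False using v by (auto intro!: eq_vecI)
  qed
  moreover have "dim_row (realify M) = n + n" using M by (simp add: realify_def)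
  ultimately show ?thesis
    unfolding eigenvalue_def eigenvector_def using v carr by (intro exI[of _ "v @\<^sub>v w"]) auto
qed

definition mat_trace :: "'a :: comm_ring_1 mat \<Rightarrow> 'a" where
  "mat_trace A = (\<Sum>i = 0..<dim_row A. A $$ (i, i))"

lemma mat_trace_mult_comm:
  fixes A B :: "'a :: comm_ring_1 mat"
  assumes A: "A \<in> carrier_mat n m" and B: "B \<in> carrier_mat m n"
  shows "mat_trace (A * B) = mat_trace (B * A)"
proof -
  have "mat_trace (A * B) = (\<Sum>i = 0..<n. \<Sum>j = 0..<m. A $$ (i, j) * B $$ (j, i))"
    unfolding mat_trace_def using A B by (auto simp: scalar_prod_def intro!: sum.cong)
  also have "\<dots> = (\<Sum>j = 0..<m. \<Sum>i = 0..<n. B $$ (j, i) * A $$ (i, j))"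
    by (subst sum.swap) (simp add: mult.commute)
  also have "\<dots> = mat_trace (B * A)"
    unfolding mat_trace_def using A B by (auto simp: scalar_prod_def intro!: sum.cong)
  finally show ?thesis .
qed

lemma mat_trace_similar:
  fixes A B :: "'a :: comm_ring_1 mat"
  assumes "similar_mat A B"
  shows "mat_trace A = mat_trace B"
proof -
  from similar_matD[OF assms] obtain n P Q where carr: "{A, B, P, Q} \<subseteq> carrier_mat n n"
    and QP: "Q * P = 1\<^sub>m n" and A: "A = P * B * Q"
    by blast
  then have P: "P \<in> carrier_mat n n" and B: "B \<in> carrier_mat n n" and Q: "Q \<in> carrier_mat n n"
    by auto
  have "mat_trace A = mat_trace (Q * (P * B))"
    unfolding A using mat_trace_mult_comm[OF mult_carrier_mat[OF P B] Q] .
  also have "Q * (P * B) = B"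
    using assoc_mult_mat[OF Q P B, symmetric] QP B by simp
  finally show ?thesis .
qed

lemma eigenvalue_if_similar_upper_triangular:
  fixes M :: "'a :: field mat"
  assumes M: "M \<in> carrier_mat n n" and B: "B \<in> carrier_mat n n"
    and "upper_triangular B" and "similar_mat M B" and i: "i < n"
  shows "eigenvalue M (B $$ (i, i))"
proof -
  have cp: "char_poly M = (\<Prod>a\<leftarrow>diag_mat B. [:- a, 1:])"
    using char_poly_similar[OF assms(4)] char_poly_upper_triangular[OF B assms(3)] by simp
  have "B $$ (i, i) \<in> set (diag_mat B)"
    using i B unfolding diag_mat_def by auto
  then have "poly (char_poly M) (B $$ (i, i)) = 0"
    unfolding cp poly_prod_list prod_list_zero_iff by force
  then show ?thesis using eigenvalue_root_char_poly[OF M] by simp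
qed

lemma nonreal_eigenvalue_if_nonreal_trace:
  fixes M :: "complex mat"
  assumes M: "M \<in> carrier_mat n n" and tr: "Im (mat_trace M) \<noteq> 0"
  shows "\<exists>\<mu>. eigenvalue M \<mu> \<and> Im \<mu> \<noteq> 0"
proof -
  from char_poly_factorized[OF M] obtain as where "char_poly M = (\<Prod>a\<leftarrow>as. [:- a, 1:])"
    by blast
  from schur_decomposition_exists[OF M this] obtain B where B: "B \<in> carrier_mat n n"
    and ut: "upper_triangular B" and sim: "similar_mat M B" by blast
  have "Im (mat_trace B) \<noteq> 0" using tr mat_trace_similar[OF sim] by simp
  then obtain i where "i < n" and "Im (B $$ (i, i)) \<noteq> 0"
    using B unfolding mat_trace_def by (force intro: ccontr)
  then show ?thesis using eigenvalue_if_similar_upper_triangular[OF M B ut sim] by blast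
qed

section \<open>Walks on the cycle\<close>

definition cycle_letter_mat :: "word \<Rightarrow> complex \<Rightarrow> letter \<Rightarrow> complex mat" where
  "cycle_letter_mat w s l = mat (length w) (length w) (\<lambda>(a, b).
     (if w ! a = l \<and> b = cyc_index (length w) (int a + 1) then s else 0) +
     (if w ! b = letter_transp l \<and> a = cyc_index (length w) (int b + 1) then cnj s else 0))"

definition cycle_word_mat :: "word \<Rightarrow> complex \<Rightarrow> word \<Rightarrow> complex mat" where
  "cycle_word_mat w s ls = foldr (\<lambda>l M. cycle_letter_mat w s l * M) ls (1\<^sub>m (length w))"

lemma cycle_letter_mat_carrier [simp]:
  "cycle_letter_mat w s l \<in> carrier_mat (length w) (length w)"
  by (simp add: cycle_letter_mat_def)

lemma cycle_word_mat_Nil: "cycle_word_mat w s [] = 1\<^sub>m (length w)"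
  by (simp add: cycle_word_mat_def)

lemma cycle_word_mat_Cons: "cycle_word_mat w s (l # ls) = cycle_letter_mat w s l * cycle_word_mat w s ls"
  by (simp add: cycle_word_mat_def)

lemma cycle_word_mat_carrier [simp]:
  "cycle_word_mat w s ls \<in> carrier_mat (length w) (length w)"
  by (induction ls) (simp_all add: cycle_word_mat_Nil cycle_word_mat_Cons
      mult_carrier_mat[of _ "length w" "length w"])

lemma cycle_letter_mat_transp:
  "cycle_letter_mat w s (letter_transp l) = transpose_mat (map_mat cnj (cycle_letter_mat w s l))"
  by (intro eq_matI) (auto simp: cycle_letter_mat_def)

lemma eval_word_realify_cycle:
  "eval_word (length w + length w) (\<lambda>i. realify (cycle_letter_mat w s (i, False))) ls
     = realify (cycle_word_mat w s ls)"
proof (induction ls)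
  case (Cons l ls)
  have "eval_letter (\<lambda>i. realify (cycle_letter_mat w s (i, False))) l = realify (cycle_letter_mat w s l)"
    using cycle_letter_mat_transp[of w s "(fst l, False)"]
    by (cases l) (auto simp: eval_letter_def letter_transp_def realify_adjoint)
  with Cons show ?case
    by (simp add: eval_word_Cons cycle_word_mat_Cons
        realify_mult[OF cycle_letter_mat_carrier cycle_word_mat_carrier])
qed (simp add: eval_word_Nil cycle_word_mat_Nil realify_one)

(* walk_count w ls f a b counts the walks on Z/|w| from a to b spelling ls with f forward
   steps: a step a \<rightarrow> a + 1 reads w ! a, a step a \<rightarrow> a - 1 reads the transpose of
   w ! (a - 1). *)
fun walk_count :: "word \<Rightarrow> word \<Rightarrow> nat \<Rightarrow> nat \<Rightarrow> nat \<Rightarrow> nat" where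
  "walk_count w [] f a b = (if f = 0 \<and> a = b then 1 else 0)"
| "walk_count w (l # ls) f a b =
     (if w ! cyc_index (length w) (int a - 1) = letter_transp l
      then walk_count w ls f (cyc_index (length w) (int a - 1)) b else 0) +
     (if 0 < f \<and> w ! a = l
      then walk_count w ls (f - 1) (cyc_index (length w) (int a + 1)) b else 0)"

lemma walk_count_eq_0: "length ls < f \<Longrightarrow> walk_count w ls f a b = 0"
  by (induction ls arbitrary: f a) auto

lemma cycle_letter_mat_row_sum:
  assumes a: "a < length w"
  shows "(\<Sum>c = 0..<length w. cycle_letter_mat w s l $$ (a, c) * X c) =
    (if w ! a = l then s * X (cyc_index (length w) (int a + 1)) else 0) +
    (if w ! cyc_index (length w) (int a - 1) = letter_transp l
     then cnj s * X (cyc_index (length w) (int a - 1)) else 0)"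
proof -
  let ?k = "length w"
  let ?succ = "cyc_index ?k (int a + 1)" and ?pred = "cyc_index ?k (int a - 1)"
  have k: "0 < ?k" using a by linarith
  have "(\<Sum>c = 0..<?k. cycle_letter_mat w s l $$ (a, c) * X c) =
     (\<Sum>c = 0..<?k. (if c = ?succ then (if w ! a = l then s * X c else 0) else 0) +
        (if c = ?pred then (if w ! c = letter_transp l then cnj s * X c else 0) else 0))"
    using a cyc_index_succ_eq_iff[OF a]
    by (intro sum.cong refl) (auto simp: cycle_letter_mat_def algebra_simps)
  also have "\<dots> = (if w ! a = l then s * X ?succ else 0) +
      (if w ! ?pred = letter_transp l then cnj s * X ?pred else 0)"
    using cyc_index_less[OF k] by (simp add: sum.distrib sum.delta)
  finally show ?thesis .
qed

lemma sum_weights_Suc_left: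
  fixes s t :: "'a :: comm_semiring_1"
  shows "(\<Sum>f\<le>Suc m. s ^ f * t ^ (Suc m - f) * g f)
    = t * (\<Sum>f\<le>m. s ^ f * t ^ (m - f) * g f) + s ^ Suc m * g (Suc m)"
proof -
  have "(\<Sum>f\<le>m. s ^ f * t ^ (Suc m - f) * g f) = (\<Sum>f\<le>m. t * (s ^ f * t ^ (m - f) * g f))"
    by (intro sum.cong refl) (simp add: Suc_diff_le algebra_simps)
  then show ?thesis by (simp add: sum_distrib_left)
qed

lemma sum_weights_Suc_right:
  fixes s t :: "'a :: comm_semiring_1"
  shows "(\<Sum>f\<le>Suc m. s ^ f * t ^ (Suc m - f) * (if 0 < f then h (f - 1) else 0))
    = s * (\<Sum>f\<le>m. s ^ f * t ^ (m - f) * h f)"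
  by (simp add: sum.atMost_Suc_shift sum_distrib_left algebra_simps del: sum.atMost_Suc)

lemma cycle_word_mat_entry:
  assumes a: "a < length w" and b: "b < length w"
  shows "cycle_word_mat w s ls $$ (a, b)
    = (\<Sum>f\<le>length ls. s ^ f * cnj s ^ (length ls - f) * of_nat (walk_count w ls f a b))"
  using a
proof (induction ls arbitrary: a)
  case Nil
  then show ?case using b by (simp add: cycle_word_mat_Nil)
next
  case (Cons l ls)
  let ?k = "length w" and ?m = "length ls"
  let ?succ = "cyc_index ?k (int a + 1)" and ?pred = "cyc_index ?k (int a - 1)"
  let ?E = "\<lambda>c. \<Sum>f\<le>?m. s ^ f * cnj s ^ (?m - f) * of_nat (walk_count w ls f c b)"
  let ?back = "\<lambda>f. of_nat (if w ! ?pred = letter_transp l then walk_count w ls f ?pred b else 0)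
    :: complex"
  let ?fwd = "\<lambda>f. of_nat (if w ! a = l then walk_count w ls f ?succ b else 0) :: complex"
  have k: "0 < ?k" using b by linarith
  have "cycle_word_mat w s (l # ls) $$ (a, b)
      = (\<Sum>c = 0..<?k. cycle_letter_mat w s l $$ (a, c) * cycle_word_mat w s ls $$ (c, b))"
    using Cons.prems b
    by (simp add: cycle_word_mat_Cons scalar_prod_def carrier_matD[OF cycle_letter_mat_carrier]
        carrier_matD[OF cycle_word_mat_carrier])
  also have "\<dots> = (\<Sum>c = 0..<?k. cycle_letter_mat w s l $$ (a, c) * ?E c)"
    by (intro sum.cong refl) (simp add: Cons.IH)
  also have "\<dots> = (if w ! a = l then s * ?E ?succ else 0) +
      (if w ! ?pred = letter_transp l then cnj s * ?E ?pred else 0)"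
    by (rule cycle_letter_mat_row_sum[OF Cons.prems])
  also have "\<dots> = s * (\<Sum>f\<le>?m. s ^ f * cnj s ^ (?m - f) * ?fwd f)
      + cnj s * (\<Sum>f\<le>?m. s ^ f * cnj s ^ (?m - f) * ?back f)"
    by simp
  also have "\<dots> = (\<Sum>f\<le>Suc ?m. s ^ f * cnj s ^ (Suc ?m - f)
      * (?back f + (if 0 < f then ?fwd (f - 1) else 0)))"
  proof -
    have "(\<Sum>f\<le>Suc ?m. s ^ f * cnj s ^ (Suc ?m - f) * ?back f)
        = cnj s * (\<Sum>f\<le>?m. s ^ f * cnj s ^ (?m - f) * ?back f)"
      using sum_weights_Suc_left[of s "cnj s" ?m ?back] by (simp add: walk_count_eq_0)
    moreover have "(\<Sum>f\<le>Suc ?m. s ^ f * cnj s ^ (Suc ?m - f) * (if 0 < f then ?fwd (f - 1) else 0))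
        = s * (\<Sum>f\<le>?m. s ^ f * cnj s ^ (?m - f) * ?fwd f)"
      by (rule sum_weights_Suc_right)
    ultimately show ?thesis by (simp add: distrib_left sum.distrib)
  qed
  also have "\<dots> = (\<Sum>f\<le>length (l # ls). s ^ f * cnj s ^ (length (l # ls) - f)
      * of_nat (walk_count w (l # ls) f a b))"
    by (intro sum.cong refl) auto
  finally show ?case .
qed

lemma walk_count_endpoint:
  assumes "walk_count w ls f a b \<noteq> 0" and "a < length w"
  shows "f \<le> length ls \<and> b = cyc_index (length w) (int a + 2 * int f - int (length ls))"
  using assms
proof (induction ls arbitrary: f a)
  case Nil
  then show ?case by (auto simp: cyc_index_of_nat split: if_splits)
next
  case (Cons l ls)
  let ?k = "length w"
  have k: "0 < ?k" using Cons.prems(2) by linarith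
  from Cons.prems(1) consider
      "walk_count w ls f (cyc_index ?k (int a - 1)) b \<noteq> 0"
    | "0 < f" "walk_count w ls (f - 1) (cyc_index ?k (int a + 1)) b \<noteq> 0"
    by (auto split: if_splits)
  then show ?case
  proof cases
    case 1
    with Cons.IH[OF 1 cyc_index_less[OF k]] show ?thesis
      using cyc_index_shift[OF k, of "int a - 1" "2 * int f - int (length ls)"]
      by (simp add: algebra_simps)
  next
    case 2
    with Cons.IH[OF 2(2) cyc_index_less[OF k]] show ?thesis
      using cyc_index_shift[OF k, of "int a + 1" "2 * int (f - 1) - int (length ls)"]
      by (auto simp: of_nat_diff algebra_simps)
  qed
qed

lemma walk_count_forward:
  assumes "j \<le> length w"
  shows "0 < walk_count w (drop j w) (length w - j) (cyc_index (length w) (int j)) 0"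
  using assms
proof (induction "length w - j" arbitrary: j)
  case 0
  then show ?case by (simp add: cyc_index_def)
next
  case (Suc d)
  let ?k = "length w"
  have j: "j < ?k" using Suc.hyps(2) by linarith
  have "0 < walk_count w (drop (Suc j) w) (?k - Suc j) (cyc_index ?k (int (Suc j))) 0"
    using Suc.hyps(1)[of "Suc j"] Suc.hyps(2) j by simp
  then show ?case
    using j by (simp add: Cons_nth_drop_Suc[OF j, symmetric] cyc_index_of_nat add.commute)
qed

lemma walk_count_backward:
  assumes "walk_count w ls 0 a b \<noteq> 0" and "0 < length w" and "j < length ls"
  shows "w ! cyc_index (length w) (int a - 1 - int j) = letter_transp (ls ! j)"
  using assms
proof (induction ls arbitrary: a j)
  case (Cons l ls)
  let ?k = "length w"
  from Cons.prems(1) have l: "w ! cyc_index ?k (int a - 1) = letter_transp l"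
    and walk: "walk_count w ls 0 (cyc_index ?k (int a - 1)) b \<noteq> 0"
    by (auto split: if_splits)
  show ?case
  proof (cases j)
    case 0
    then show ?thesis using l by simp
  next
    case (Suc i)
    with Cons.IH[OF walk Cons.prems(2), of i] Cons.prems(3) show ?thesis
      using cyc_index_shift[OF Cons.prems(2), of "int a - 1" "- 1 - int i"]
      by (simp add: algebra_simps)
  qed
qed simp

lemma closed_walk_forward_steps:
  assumes "walk_count w w f a a \<noteq> 0" and a: "a < length w"
  shows "f = 0 \<or> 2 * f = length w \<or> f = length w"
proof -
  let ?k = "length w"
  have k: "0 < ?k" using a by linarith
  from walk_count_endpoint[OF assms] have f: "f \<le> ?k"
    and "cyc_index ?k (int a) = cyc_index ?k (int a + 2 * int f - int ?k)"
    using cyc_index_of_nat[OF a] by auto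
  then have "int ?k dvd int ?k - 2 * int f"
    by (simp add: cyc_index_eq_iff[OF k] mod_eq_dvd_iff)
  then have "int ?k dvd int (2 * f)"
    using dvd_diff[OF dvd_refl[of "int ?k"]] by fastforce
  then obtain q where q: "2 * f = ?k * q"
    by (auto simp only: int_dvd_int_iff elim!: dvdE)
  then have "?k * q \<le> ?k * 2" using f by linarith
  then have "q \<le> 2" using k by simp
  then show ?thesis using q by (auto simp: le_Suc_eq numeral_2_eq_2)
qed

definition closed_walks :: "word \<Rightarrow> nat \<Rightarrow> nat" where
  "closed_walks w f = (\<Sum>a<length w. walk_count w w f a a)"

lemma closed_walks_forward_pos: "0 < length w \<Longrightarrow> 0 < closed_walks w (length w)"
  using walk_count_forward[of 0 w] unfolding closed_walks_def
  by (intro sum_pos2[of _ 0]) (auto simp: cyc_index_def)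

lemma closed_walks_backward_eq_0:
  assumes k: "0 < length w" and "\<not> symmetric_word w"
  shows "closed_walks w 0 = 0"
proof (rule ccontr)
  assume "closed_walks w 0 \<noteq> 0"
  then obtain a where "walk_count w w 0 a a \<noteq> 0"
    unfolding closed_walks_def by (auto intro: ccontr)
  then have "w ! j = letter_transp (w ! cyc_index (length w) (int a - 1 - int j))"
    if "j < length w" for j
    using walk_count_backward[OF _ k that] by (metis letter_transp_transp)
  then show False using symmetric_word_if_reflection[OF k] assms(2) by blast
qed

lemma mat_trace_cycle_word_mat:
  "mat_trace (cycle_word_mat w s w)
    = (\<Sum>f\<le>length w. s ^ f * cnj s ^ (length w - f) * of_nat (closed_walks w f))"
proof -
  let ?k = "length w"
  have "mat_trace (cycle_word_mat w s w) = (\<Sum>a<?k. cycle_word_mat w s w $$ (a, a))"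
    by (simp add: mat_trace_def atLeast0LessThan carrier_matD[OF cycle_word_mat_carrier])
  also have "\<dots> = (\<Sum>a<?k. \<Sum>f\<le>?k. s ^ f * cnj s ^ (?k - f) * of_nat (walk_count w w f a a))"
    by (intro sum.cong refl) (simp add: cycle_word_mat_entry)
  also have "\<dots> = (\<Sum>f\<le>?k. s ^ f * cnj s ^ (?k - f) * of_nat (closed_walks w f))"
    by (subst sum.swap) (simp add: closed_walks_def sum_distrib_left)
  finally show ?thesis .
qed

lemma Im_mat_trace_cycle_word_mat:
  assumes "w \<noteq> []"
  defines "s \<equiv> cis (pi / (2 * real (length w)))"
  shows "Im (mat_trace (cycle_word_mat w s w))
    = real (closed_walks w (length w)) - real (closed_walks w 0)"
proof -
  let ?k = "length w"
  have k: "0 < ?k" using assms(1) by simp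
  have weight: "Im (s ^ f * cnj s ^ (?k - f)) * real (closed_walks w f)
      = (if f = ?k then real (closed_walks w f) else if f = 0 then - real (closed_walks w f) else 0)"
    if f: "f \<le> ?k" for f
  proof (cases "closed_walks w f = 0")
    case False
    then obtain a where "walk_count w w f a a \<noteq> 0" "a < ?k"
      unfolding closed_walks_def by (auto intro: ccontr)
    then have cases: "f = 0 \<or> 2 * f = ?k \<or> f = ?k" by (rule closed_walk_forward_steps)
    have "s ^ f * cnj s ^ (?k - f) = cis ((real f - real (?k - f)) * (pi / (2 * real ?k)))"
      unfolding s_def by (simp add: DeMoivre cis_cnj cis_mult diff_divide_distrib algebra_simps)
    also have "(real f - real (?k - f)) * (pi / (2 * real ?k))
        = (2 * real f - real ?k) * pi / (2 * real ?k)"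
      using f k by (simp add: of_nat_diff field_simps)
    finally have im: "Im (s ^ f * cnj s ^ (?k - f)) = sin ((2 * real f - real ?k) * pi / (2 * real ?k))"
      by simp
    from cases consider "f = 0" | "2 * f = ?k" | "f = ?k" by blast
    then show ?thesis
    proof cases
      case 1
      then show ?thesis using im k by simp
    next
      case 2
      then have zero: "2 * real f - real ?k = 0" using arg_cong[OF 2, of real] by simp
      have "f \<noteq> ?k" "f \<noteq> 0" using 2 k by linarith+
      then show ?thesis using im[unfolded zero] by simp
    next
      case 3
      then show ?thesis using im k by simp
    qed
  qed auto
  have "Im (mat_trace (cycle_word_mat w s w))
      = (\<Sum>f\<le>?k. Im (s ^ f * cnj s ^ (?k - f)) * real (closed_walks w f))"
    by (simp add: mat_trace_cycle_word_mat Im_sum)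
  also have "\<dots> = (\<Sum>f\<le>?k. if f = ?k then real (closed_walks w f)
      else if f = 0 then - real (closed_walks w f) else 0)"
    by (intro sum.cong refl weight) simp
  also have "\<dots> = (\<Sum>f\<le>?k. (if f = ?k then real (closed_walks w f) else 0)
      + (if f = 0 then - real (closed_walks w f) else 0))"
    using k by (intro sum.cong refl) auto
  also have "\<dots> = real (closed_walks w ?k) - real (closed_walks w 0)"
    by (simp add: sum.distrib)
  finally show ?thesis .
qed

section \<open>Positive semi-definite products are symmetric\<close>

lemma psd_word_imp_symmetric_word:
  assumes "P \<noteq> []" and psd: "psd_word P"
  shows "symmetric_word P"
proof (rule ccontr)
  assume not_sym: "\<not> symmetric_word P"
  let ?k = "length P"
  define s where "s = cis (pi / (2 * real ?k))"
  define M where "M = cycle_word_mat P s P"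
  have k: "0 < ?k" using assms(1) by simp
  have "closed_walks P 0 = 0" "0 < closed_walks P ?k"
    using closed_walks_backward_eq_0[OF k not_sym] closed_walks_forward_pos[OF k] by simp_all
  then have "Im (mat_trace M) \<noteq> 0"
    using Im_mat_trace_cycle_word_mat[OF assms(1)] unfolding M_def s_def by simp
  then obtain \<mu> where ev: "eigenvalue M \<mu>" and "Im \<mu> \<noteq> 0"
    using nonreal_eigenvalue_if_nonreal_trace[of M ?k] unfolding M_def by auto
  have "eigenvalue (map_mat complex_of_real
      (eval_word (?k + ?k) (\<lambda>i. realify (cycle_letter_mat P s (i, False))) P)) \<mu>"
    using eigenvalue_realify[OF cycle_word_mat_carrier] ev
    unfolding M_def eval_word_realify_cycle by blast
  with psd have "\<mu> \<in> \<real>"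
    unfolding psd_word_def by (meson cycle_letter_mat_carrier realify_carrier)
  with \<open>Im \<mu> \<noteq> 0\<close> show False by (simp add: complex_is_Real_iff)
qed

theorem mainTheorem2:
  fixes P :: word
  assumes "P \<noteq> []"
  shows "psd_word P \<longleftrightarrow> symmetric_word P"
  using psd_word_imp_symmetric_word[OF assms] symmetric_word_imp_psd_word by blast

end
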